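(* Let $\sigma>0$ and let $\mu_1,\dots,\mu_n,\mu_1^*,\dots,\mu_n^*\in\mathbb{R}$. Let $X_1,\dots,X_n$ be independent random variables with $X_i\sim \mathrm{Gum}(\mu_i,\sigma)$, and let $Y_1,\dots,Y_n$ be independent random variables with $Y_i\sim \mathrm{Gum}(\mu_i^*,\sigma)$, $i=1,\dots,n$. Let $X_{n:n}=\max\{X_1,\dots,X_n\}$ and $Y_{n:n}=\max\{Y_1,\dots,Y_n\}$. If $\mu_i\geq \mu_i^*$ for all $i=1,\dots,n$, then $X_{n:n}\geq_{lr} Y_{n:n}$.
   Context: A random variable $X$ is said to have the Gumbel distribution $\mathrm{Gum}(\mu,\sigma)$ (location $\mu\in\mathbb{R}$, scale $\sigma>0$) if its cumulative distribution function is $F(x)=e^{-e^{-(x-\mu)/\sigma}}$, $x\in\mathbb{R}$. For continuous random variables $X,Y$ with densities $f_X,f_Y$, $X\leq_{lr}Y$ (likelihood ratio order) means that $f_Y(x)/f_X(x)$ is increasing in $x$; $X\geq_{lr}Y$ means $Y\leq_{lr}X$. *)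

theory Defs
  imports "HOL-Probability.Probability"
begin

definition gumbel_cdf :: "real \<Rightarrow> real \<Rightarrow> real \<Rightarrow> real" where
  "gumbel_cdf mu scl x = exp (- exp (- (x - mu) / scl))"

definition is_gumbel :: "'a measure \<Rightarrow> ('a \<Rightarrow> real) \<Rightarrow> real \<Rightarrow> real \<Rightarrow> bool" where
  "is_gumbel M X mu scl \<longleftrightarrow> X \<in> borel_measurable M \<and>
     (\<forall>x. measure M {\<omega> \<in> space M. X \<omega> \<le> x} = gumbel_cdf mu scl x)"

definition lr_le :: "'a measure \<Rightarrow> ('a \<Rightarrow> real) \<Rightarrow> 'b measure \<Rightarrow> ('b \<Rightarrow> real) \<Rightarrow> bool" where
  "lr_le M X N Y \<longleftrightarrow> (\<exists>fX fY.
     (\<forall>x. 0 \<le> fX x) \<and> (\<forall>x. 0 \<le> fY x) \<and>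
     distributed M lborel X (\<lambda>x. ennreal (fX x)) \<and>
     distributed N lborel Y (\<lambda>x. ennreal (fY x)) \<and>
     mono (\<lambda>x. fY x / fX x))"

end

theory Submission
  imports Defs "HOL-Real_Asymp.Real_Asymp"
begin

text \<open>Gumbel CDFs of a common scale multiply like
  exponentials, so the maximum of independent \<open>Gum(\<mu>\<^sub>i,\<sigma>)\<close> variables is again Gumbel,
  with location \<open>\<sigma> ln (\<Sum>\<^sub>i exp (\<mu>\<^sub>i/\<sigma>))\<close>, which is monotone in every \<open>\<mu>\<^sub>i\<close>.
  And within the location family \<open>Gum(\<cdot>,\<sigma>)\<close> the density ratio
  \<open>f\<^sub>m(x) / f\<^sub>m\<^sub>'(x) = exp ((m - m')/\<sigma> - exp (-x/\<sigma>) (exp (m/\<sigma>) - exp (m'/\<sigma>)))\<close>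
  is increasing as soon as \<open>m' \<le> m\<close>.\<close>

definition gumbel_pdf :: "real \<Rightarrow> real \<Rightarrow> real \<Rightarrow> real" where
  "gumbel_pdf mu scl x = exp (- (x - mu) / scl) * exp (- exp (- (x - mu) / scl)) / scl"

definition gumbel_max_location :: "real \<Rightarrow> ('i \<Rightarrow> real) \<Rightarrow> 'i set \<Rightarrow> real" where
  "gumbel_max_location scl mu I = scl * ln (\<Sum>i\<in>I. exp (mu i / scl))"

lemma gumbel_pdf_nonneg: "scl > 0 \<Longrightarrow> 0 \<le> gumbel_pdf mu scl x"
  by (simp add: gumbel_pdf_def)

lemma borel_measurable_gumbel_pdf[measurable]: "gumbel_pdf mu scl \<in> borel_measurable borel"
  unfolding gumbel_pdf_def by measurable

lemma nn_integral_gumbel_pdf_atMost: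
  assumes scl: "scl > 0"
  shows "(\<integral>\<^sup>+x. ennreal (gumbel_pdf mu scl x) * indicator {..a} x \<partial>lborel)
       = ennreal (gumbel_cdf mu scl a)"
proof -
  have "(\<integral>\<^sup>+x. ennreal (gumbel_pdf mu scl x) * indicator {..a} x \<partial>lborel)
      = ennreal \<bar>-1\<bar> * (\<integral>\<^sup>+x. ennreal (gumbel_pdf mu scl (0 + -1 * x))
                                 * indicator {..a} (0 + -1 * x) \<partial>lborel)"
    by (rule nn_integral_real_affine) auto
  also have "\<dots> = (\<integral>\<^sup>+x. ennreal (gumbel_pdf mu scl (- x)) * indicator {- a..} x \<partial>lborel)"
    by (simp add: indicator_def) (intro nn_integral_cong arg_cong2[where f=times] refl, auto)
  also have "\<dots> = ennreal (0 - (- exp (- exp ((- a + mu) / scl))))"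
  proof (rule nn_integral_FTC_atLeast)
    show "(\<lambda>x. gumbel_pdf mu scl (- x)) \<in> borel_measurable borel"
      by measurable
    show "DERIV (\<lambda>x. - exp (- exp ((x + mu) / scl))) x :> gumbel_pdf mu scl (- x)" for x
      unfolding gumbel_pdf_def using scl by (auto intro!: derivative_eq_intros simp: field_simps)
    show "0 \<le> gumbel_pdf mu scl (- x)" for x
      using scl by (rule gumbel_pdf_nonneg)
    show "((\<lambda>x. - exp (- exp ((x + mu) / scl))) \<longlongrightarrow> 0) at_top"
      using scl by real_asymp
  qed
  also have "\<dots> = ennreal (gumbel_cdf mu scl a)"
    by (simp add: gumbel_cdf_def field_simps)
  finally show ?thesis .
qed

lemma distributed_gumbel_pdf:
  assumes "prob_space M" and scl: "scl > 0" and Z: "is_gumbel M Z mu scl"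
  shows "distributed M lborel Z (\<lambda>x. ennreal (gumbel_pdf mu scl x))"
proof -
  interpret prob_space M by fact
  show ?thesis
  proof (rule distributedI_borel_atMost[where g="gumbel_cdf mu scl"])
    show "Z \<in> borel_measurable M"
      using Z by (simp add: is_gumbel_def)
    show "(\<integral>\<^sup>+x. ennreal (gumbel_pdf mu scl x * indicator {..a} x) \<partial>lborel)
        = ennreal (gumbel_cdf mu scl a)" for a
      unfolding nn_integral_gumbel_pdf_atMost[OF scl, symmetric]
      by (intro nn_integral_cong) (simp split: split_indicator)
    show "emeasure M {x \<in> space M. Z x \<le> a} = ennreal (gumbel_cdf mu scl a)" for a
      using Z by (simp add: is_gumbel_def emeasure_eq_measure)
  qed (use scl gumbel_pdf_nonneg in auto)
qed

lemma gumbel_pdf_ratio: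
  assumes "scl > 0"
  shows "gumbel_pdf mu scl x / gumbel_pdf mu' scl x
       = exp ((mu - mu') / scl - exp (- x / scl) * (exp (mu / scl) - exp (mu' / scl)))"
proof -
  have shift: "exp (- (x - m) / scl) = exp (- x / scl) * exp (m / scl)" for m
    by (simp add: exp_add[symmetric] diff_divide_distrib)
  show ?thesis
    using assms unfolding gumbel_pdf_def shift
    by (simp add: exp_diff exp_add[symmetric] exp_minus field_simps right_diff_distrib)
qed

lemma mono_gumbel_pdf_ratio:
  assumes scl: "scl > 0" and "mu' \<le> mu"
  shows "mono (\<lambda>x. gumbel_pdf mu scl x / gumbel_pdf mu' scl x)"
proof (rule monoI, unfold gumbel_pdf_ratio[OF scl])
  fix x y :: real
  assume "x \<le> y"
  have "exp (mu' / scl) \<le> exp (mu / scl)"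
    using assms by (simp add: divide_right_mono)
  moreover have "exp (- y / scl) \<le> exp (- x / scl)"
    using scl \<open>x \<le> y\<close> by (simp add: divide_right_mono)
  ultimately have "exp (- y / scl) * (exp (mu / scl) - exp (mu' / scl))
                 \<le> exp (- x / scl) * (exp (mu / scl) - exp (mu' / scl))"
    by (intro mult_right_mono) auto
  then show "exp ((mu - mu') / scl - exp (- x / scl) * (exp (mu / scl) - exp (mu' / scl)))
           \<le> exp ((mu - mu') / scl - exp (- y / scl) * (exp (mu / scl) - exp (mu' / scl)))"
    by simp
qed

lemma lr_le_gumbel:
  assumes "prob_space M" and "prob_space N" and scl: "scl > 0"
    and "is_gumbel M X mu scl" and "is_gumbel N Y mu' scl" and "mu' \<le> mu"
  shows "lr_le N Y M X"
  unfolding lr_le_def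
proof (intro exI conjI allI)
  show "distributed M lborel X (\<lambda>x. ennreal (gumbel_pdf mu scl x))"
    using assms(1,3,4) by (rule distributed_gumbel_pdf)
  show "distributed N lborel Y (\<lambda>x. ennreal (gumbel_pdf mu' scl x))"
    using assms(2,3,5) by (rule distributed_gumbel_pdf)
  show "mono (\<lambda>x. gumbel_pdf mu scl x / gumbel_pdf mu' scl x)"
    using scl assms(6) by (rule mono_gumbel_pdf_ratio)
qed (use gumbel_pdf_nonneg[OF scl] in auto)

lemma prod_gumbel_cdf:
  assumes "scl > 0" and "finite I" and "I \<noteq> {}"
  shows "(\<Prod>i\<in>I. gumbel_cdf (mu i) scl x) = gumbel_cdf (gumbel_max_location scl mu I) scl x"
proof -
  have pos: "(\<Sum>i\<in>I. exp (mu i / scl)) > 0"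
    using assms by (intro sum_pos) auto
  have "(\<Prod>i\<in>I. gumbel_cdf (mu i) scl x) = exp (- (\<Sum>i\<in>I. exp (- (x - mu i) / scl)))"
    unfolding gumbel_cdf_def sum_negf[symmetric] by (rule exp_sum[symmetric]) fact
  also have "(\<Sum>i\<in>I. exp (- (x - mu i) / scl)) = exp (- x / scl) * (\<Sum>i\<in>I. exp (mu i / scl))"
    unfolding sum_distrib_left
    by (intro sum.cong refl) (simp add: exp_add[symmetric] diff_divide_distrib)
  also have "\<dots> = exp (- x / scl) * exp (gumbel_max_location scl mu I / scl)"
    using assms pos by (simp add: gumbel_max_location_def)
  also have "\<dots> = exp (- (x - gumbel_max_location scl mu I) / scl)"
    by (simp add: exp_add[symmetric] diff_divide_distrib)
  finally show ?thesis
    by (simp add: gumbel_cdf_def)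
qed

lemma is_gumbel_Max:
  assumes "prob_space M" and scl: "scl > 0" and I: "finite I" "I \<noteq> {}"
    and indep: "prob_space.indep_vars M (\<lambda>_. borel) X I"
    and X: "\<And>i. i \<in> I \<Longrightarrow> is_gumbel M (X i) (mu i) scl"
  shows "is_gumbel M (\<lambda>\<omega>. Max ((\<lambda>i. X i \<omega>) ` I)) (gumbel_max_location scl mu I) scl"
  unfolding is_gumbel_def
proof safe
  interpret prob_space M by fact
  show "(\<lambda>\<omega>. Max ((\<lambda>i. X i \<omega>) ` I)) \<in> borel_measurable M"
    using I X by (intro borel_measurable_Max) (auto simp: is_gumbel_def)
  fix x
  have "{\<omega> \<in> space M. Max ((\<lambda>i. X i \<omega>) ` I) \<le> x} = (\<Inter>i\<in>I. X i -` {..x} \<inter> space M)"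
    using I by auto
  moreover have "prob (\<Inter>i\<in>I. X i -` {..x} \<inter> space M) = (\<Prod>i\<in>I. prob (X i -` {..x} \<inter> space M))"
    by (rule indep_varsD[OF indep]) (use I in auto)
  ultimately have "prob {\<omega> \<in> space M. Max ((\<lambda>i. X i \<omega>) ` I) \<le> x}
           = (\<Prod>i\<in>I. prob (X i -` {..x} \<inter> space M))"
    by simp
  also have "\<dots> = (\<Prod>i\<in>I. gumbel_cdf (mu i) scl x)"
  proof (rule prod.cong)
    fix i
    assume "i \<in> I"
    moreover have "X i -` {..x} \<inter> space M = {\<omega> \<in> space M. X i \<omega> \<le> x}"
      by auto
    ultimately show "prob (X i -` {..x} \<inter> space M) = gumbel_cdf (mu i) scl x"
      using X by (simp add: is_gumbel_def)
  qed simp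
  finally show "prob {\<omega> \<in> space M. Max ((\<lambda>i. X i \<omega>) ` I) \<le> x}
              = gumbel_cdf (gumbel_max_location scl mu I) scl x"
    using prod_gumbel_cdf[OF scl I] by simp
qed

lemma gumbel_max_location_mono:
  assumes "scl > 0" and "finite I" and "I \<noteq> {}" and "\<And>i. i \<in> I \<Longrightarrow> mu' i \<le> mu i"
  shows "gumbel_max_location scl mu' I \<le> gumbel_max_location scl mu I"
proof -
  have "(\<Sum>i\<in>I. exp (mu' i / scl)) \<le> (\<Sum>i\<in>I. exp (mu i / scl))"
    using assms by (intro sum_mono) (simp add: divide_right_mono)
  moreover have "(\<Sum>i\<in>I. exp (mu' i / scl)) > 0"
    using assms by (intro sum_pos) auto
  ultimately show ?thesis
    using assms by (simp add: gumbel_max_location_def)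
qed

theorem theorem3p1:
  fixes M :: "'a measure" and N :: "'b measure"
    and X :: "nat \<Rightarrow> 'a \<Rightarrow> real" and Y :: "nat \<Rightarrow> 'b \<Rightarrow> real"
    and mu mu' :: "nat \<Rightarrow> real" and scl :: real and n :: nat
  assumes "prob_space M" and "prob_space N"
    and "scl > 0" and "n \<ge> 1"
    and "prob_space.indep_vars M (\<lambda>_. borel) X {1..n}"
    and "prob_space.indep_vars N (\<lambda>_. borel) Y {1..n}"
    and "\<And>i. i \<in> {1..n} \<Longrightarrow> is_gumbel M (X i) (mu i) scl"
    and "\<And>i. i \<in> {1..n} \<Longrightarrow> is_gumbel N (Y i) (mu' i) scl"
    and "\<And>i. i \<in> {1..n} \<Longrightarrow> mu i \<ge> mu' i"
  shows "lr_le N (\<lambda>\<omega>. Max ((\<lambda>i. Y i \<omega>) ` {1..n}))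
               M (\<lambda>\<omega>. Max ((\<lambda>i. X i \<omega>) ` {1..n}))"
proof (rule lr_le_gumbel)
  have I: "finite {1..n}" "{1..n} \<noteq> {}"
    using \<open>n \<ge> 1\<close> by auto
  show "is_gumbel M (\<lambda>\<omega>. Max ((\<lambda>i. X i \<omega>) ` {1..n})) (gumbel_max_location scl mu {1..n}) scl"
    using is_gumbel_Max[OF assms(1,3) I assms(5)] assms(7) by blast
  show "is_gumbel N (\<lambda>\<omega>. Max ((\<lambda>i. Y i \<omega>) ` {1..n})) (gumbel_max_location scl mu' {1..n}) scl"
    using is_gumbel_Max[OF assms(2,3) I assms(6)] assms(8) by blast
  show "gumbel_max_location scl mu' {1..n} \<le> gumbel_max_location scl mu {1..n}"
    using gumbel_max_location_mono[OF \<open>scl > 0\<close> I] assms(9) by blast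
qed (use assms in auto)

end
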